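(* In the Ornstein–Uhlenbeck setting described in the context, the optimal intervention boundaries satisfy: as functions of $c_1$ (all other parameters fixed), $c_1\mapsto a^*(c_1)$ is decreasing and $c_1\mapsto b^*(c_1)$ is increasing; as functions of $c_2$ (all other parameters fixed), $c_2\mapsto a^*(c_2)$ is decreasing and $c_2\mapsto b^*(c_2)$ is increasing.
   Context: Fix parameters $r>0$, $\rho>0$, $m\in\mathbb{R}$, $\sigma>0$, $\theta\in\mathbb{R}$ and constant marginal intervention costs $c_1,c_2\in\mathbb{R}$ with $c_1+c_2>0$ (the parameters are varied only within this range). The (log-)exchange rate controlled by $\nu=\xi-\eta$ (difference of two nondecreasing adapted left-continuous processes started at $0$, with increments on disjoint sets) evolves as $dX_t=\rho(m-X_t)dt+\sigma dB_t+d\xi_t-d\eta_t$, $X_0=x\in\mathbb{R}$, where $B$ is a Brownian motion. The central bank minimizes over admissible controls $\mathbb{E}_x[\int_0^\infty e^{-rs}\tfrac12(X_s-\theta)^2ds+c_1\int_0^\infty e^{-rs}d\xi_s+c_2\int_0^\infty e^{-rs}d\eta_s]$ (jumps included). Let $D_\alpha(y)=\frac{e^{-y^2/4}}{\Gamma(-\alpha)}\int_0^\infty t^{-\alpha-1}e^{-t^2/2-yt}dt$ ($\alpha<0$), $\widehat\phi(x)=e^{\rho(x-m)^2/(2\sigma^2)}D_{-(r+\rho)/\rho}\big(\tfrac{(x-m)\sqrt{2\rho}}{\sigma}\big)$, $\widehat\psi(x)=e^{\rho(x-m)^2/(2\sigma^2)}D_{-(r+\rho)/\rho}\big(-\tfrac{(x-m)\sqrt{2\rho}}{\sigma}\big)$,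 $\widehat m'(z)=\frac{2}{\sigma^2}e^{-\rho(z-m)^2/\sigma^2}$. The optimal intervention boundaries $a^*<b^*$ are the unique pair with $a^*<\theta-(r+\rho)c_1$ and $b^*>\theta+(r+\rho)c_2$ solving $\int_a^b(z-\theta+(r+\rho)c_1)\widehat m'\widehat\phi\,dz=-(r+\rho)(c_1+c_2)\int_b^\infty\widehat m'\widehat\phi\,dz$ and $\int_a^b(z-\theta-(r+\rho)c_2)\widehat m'\widehat\psi\,dz=(r+\rho)(c_1+c_2)\int_{-\infty}^a\widehat m'\widehat\psi\,dz$; the optimal policy keeps $X$ in $[a^*,b^*]$ by minimal reflection. *)

theory Defs
  imports "HOL-Analysis.Analysis"
begin

text \<open>Parabolic cylinder function D_alpha(y) for alpha < 0 (integral representation).\<close>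
definition parab_cyl :: "real \<Rightarrow> real \<Rightarrow> real" where
  "parab_cyl \<alpha> y = exp (- (y^2) / 4) / Gamma (- \<alpha>) *
     (LBINT t=0..\<infinity>. t powr (- \<alpha> - 1) * exp (- (t^2) / 2 - y * t))"

definition phi_hat :: "real \<Rightarrow> real \<Rightarrow> real \<Rightarrow> real \<Rightarrow> real \<Rightarrow> real" where
  "phi_hat r \<rho> m \<sigma> x = exp (\<rho> * (x - m)^2 / (2 * \<sigma>^2)) *
     parab_cyl (- (r + \<rho>) / \<rho>) ((x - m) * sqrt (2 * \<rho>) / \<sigma>)"

definition psi_hat :: "real \<Rightarrow> real \<Rightarrow> real \<Rightarrow> real \<Rightarrow> real \<Rightarrow> real" where
  "psi_hat r \<rho> m \<sigma> x = exp (\<rho> * (x - m)^2 / (2 * \<sigma>^2)) *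
     parab_cyl (- (r + \<rho>) / \<rho>) (- ((x - m) * sqrt (2 * \<rho>) / \<sigma>))"

definition speed_dens :: "real \<Rightarrow> real \<Rightarrow> real \<Rightarrow> real \<Rightarrow> real" where
  "speed_dens \<rho> m \<sigma> z = 2 / \<sigma>^2 * exp (- \<rho> * (z - m)^2 / \<sigma>^2)"

text \<open>(a,b) is a pair of optimal intervention boundaries for costs c1, c2:
  the pair characterised in the paper by the two integral equations together
  with a < theta - (r+rho) c1 and b > theta + (r+rho) c2.\<close>
definition opt_boundaries ::
  "real \<Rightarrow> real \<Rightarrow> real \<Rightarrow> real \<Rightarrow> real \<Rightarrow> real \<Rightarrow> real \<Rightarrow> real \<Rightarrow> real \<Rightarrow> bool" where
  "opt_boundaries r \<rho> m \<sigma> \<theta> c1 c2 a b \<longleftrightarrow>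
     a < b \<and> a < \<theta> - (r + \<rho>) * c1 \<and> b > \<theta> + (r + \<rho>) * c2 \<and>
     (LBINT z=ereal a..ereal b. (z - \<theta> + (r + \<rho>) * c1) * speed_dens \<rho> m \<sigma> z * phi_hat r \<rho> m \<sigma> z)
       = - (r + \<rho>) * (c1 + c2) * (LBINT z=ereal b..\<infinity>. speed_dens \<rho> m \<sigma> z * phi_hat r \<rho> m \<sigma> z) \<and>
     (LBINT z=ereal a..ereal b. (z - \<theta> - (r + \<rho>) * c2) * speed_dens \<rho> m \<sigma> z * psi_hat r \<rho> m \<sigma> z)
       = (r + \<rho>) * (c1 + c2) * (LBINT z=-\<infinity>..ereal a. speed_dens \<rho> m \<sigma> z * psi_hat r \<rho> m \<sigma> z)"

end

theory Submission
  imports Defs "HOL-Probability.Distributions"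
begin

(* Write w = m' phi_hat, v = m' psi_hat, p = theta - (r + rho) c1 and q = theta + (r + rho) c2.
   The boundary equations become F = 0 = G for F = phi_condition w p q a b and
   G = psi_condition v p q a b, where F is antitone in p and monotone in q and G the other way
   round; raising a cost lowers p or raises q, so the new boundaries (a', b') satisfy
   F <= 0 <= G at (p, q, a', b').  Passing from (a, b) to (a', b') changes F and G by the
   integrals of (z - p) u over [a', a] and of (z - q) u over [b, b'] (u = w resp. v).  If exactly
   one endpoint moves inward, one of these two inequalities fails by a sign argument; if both do,
   the strict increase of v / w = psi_hat / phi_hat gives G < (v a' / w a') F <= 0. *)

lemma interval_integral_pos:
  fixes a b :: ereal and f :: "real \<Rightarrow> real"
  assumes "a < b" and f: "interval_lebesgue_integrable lborel a b f"
    and pos: "\<And>z. a < ereal z \<Longrightarrow> ereal z < b \<Longrightarrow> 0 < f z"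
  shows "0 < (LBINT z=a..b. f z)"
proof -
  let ?g = "\<lambda>z. indicator (einterval a b) z *\<^sub>R f z"
  have eq: "(LBINT z=a..b. f z) = integral\<^sup>L lborel ?g"
    using \<open>a < b\<close> by (simp add: interval_lebesgue_integral_le_eq set_lebesgue_integral_def)
  have int: "integrable lborel ?g"
    using f less_imp_le[OF \<open>a < b\<close>]
    by (simp add: interval_lebesgue_integrable_def set_integrable_def)
  have nn: "AE z in lborel. 0 \<le> ?g z"
    using pos by (auto simp: indicator_def einterval_iff less_imp_le)
  have "integral\<^sup>L lborel ?g \<noteq> 0"
  proof
    assume "integral\<^sup>L lborel ?g = 0"
    then have "AE z in lborel. ?g z = 0"
      using integral_nonneg_eq_0_iff_AE[OF int nn] by simp
    then have "AE z in lborel. z \<notin> einterval a b"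
      by (rule AE_mp) (auto intro!: AE_I2 dest: pos simp: einterval_iff)
    then have "einterval a b \<in> null_sets lborel"
      by (simp add: AE_iff_null_sets)
    then have "negligible (einterval a b)"
      by (simp add: negligible_iff_null_sets null_sets_completionI)
    then show False
      using open_not_negligible[OF open_einterval] einterval_nonempty[OF \<open>a < b\<close>] by blast
  qed
  with integral_nonneg_AE[OF nn] eq show ?thesis by simp
qed

lemma interval_integral_nonneg:
  fixes a b :: ereal and f :: "real \<Rightarrow> real"
  assumes "a \<le> b" and "\<And>z. a < ereal z \<Longrightarrow> ereal z < b \<Longrightarrow> 0 \<le> f z"
  shows "0 \<le> (LBINT z=a..b. f z)"
proof -
  have "(LBINT z=a..b. f z) = integral\<^sup>L lborel (\<lambda>z. indicator (einterval a b) z * f z)"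
    using assms(1) by (simp add: interval_lebesgue_integral_le_eq set_lebesgue_integral_def)
  also have "\<dots> \<ge> 0"
    by (rule integral_nonneg_AE) (auto simp: indicator_def einterval_iff assms(2))
  finally show ?thesis .
qed

lemma interval_integral_neg:
  fixes a b :: ereal and f :: "real \<Rightarrow> real"
  assumes "a < b" and "interval_lebesgue_integrable lborel a b f"
    and "\<And>z. a < ereal z \<Longrightarrow> ereal z < b \<Longrightarrow> f z < 0"
  shows "(LBINT z=a..b. f z) < 0"
  using interval_integral_pos[of a b "\<lambda>z. - f z"]
    interval_lebesgue_integrable_mult_right[of "-1" lborel a b f] assms
  by (simp add: interval_lebesgue_integral_uminus)

lemma interval_integral_nonpos:
  fixes a b :: ereal and f :: "real \<Rightarrow> real"
  assumes "a \<le> b" and "\<And>z. a < ereal z \<Longrightarrow> ereal z < b \<Longrightarrow> f z \<le> 0"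
  shows "(LBINT z=a..b. f z) \<le> 0"
  using interval_integral_nonneg[of a b "\<lambda>z. - f z"] assms
  by (simp add: interval_lebesgue_integral_uminus)

lemma interval_integrable_bounded:
  fixes f :: "real \<Rightarrow> real"
  assumes "f \<in> borel_measurable borel" and "x \<le> y" and "bounded (f ` {x..y})"
  shows "interval_lebesgue_integrable lborel (ereal x) (ereal y) f"
proof -
  obtain B where B: "\<forall>z\<in>{x..y}. \<bar>f z\<bar> \<le> B"
    using assms(3) by (auto simp: bounded_real)
  have "integrable lborel (\<lambda>z. indicator {x<..<y} z *\<^sub>R f z)"
    by (rule integrableI_bounded_set_indicator[where B=B]) (use assms B in auto)
  then show ?thesis
    using assms(2) by (simp add: interval_lebesgue_integrable_def set_integrable_def)
qed

lemma interval_integrable_locally_bounded: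
  fixes u :: "real \<Rightarrow> real"
  assumes "u \<in> borel_measurable borel" and "\<And>x y. bounded (u ` {x..y})"
  shows "interval_lebesgue_integrable lborel (ereal x) (ereal y) u"
proof (cases "x \<le> y")
  case True
  then show ?thesis by (rule interval_integrable_bounded[OF assms(1) _ assms(2)])
next
  case False
  then have "interval_lebesgue_integrable lborel (ereal y) (ereal x) u"
    by (intro interval_integrable_bounded[OF assms(1) _ assms(2)]) simp
  then show ?thesis by (simp add: interval_integrable_endpoints_reverse)
qed

lemma bounded_image_affine_mult:
  fixes u :: "real \<Rightarrow> real"
  assumes "bounded (u ` {x..y})"
  shows "bounded ((\<lambda>z. (z - c) * u z) ` {x..y})"
proof -
  obtain B where B: "\<forall>z\<in>{x..y}. \<bar>u z\<bar> \<le> B"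
    using assms by (auto simp: bounded_real)
  have "\<bar>(z - c) * u z\<bar> \<le> (\<bar>x\<bar> + \<bar>y\<bar> + \<bar>c\<bar>) * B" if "z \<in> {x..y}" for z
    unfolding abs_mult using that B by (intro mult_mono) auto
  then show ?thesis
    by (auto simp: bounded_real intro!: exI[where x="(\<bar>x\<bar> + \<bar>y\<bar> + \<bar>c\<bar>) * B"])
qed

lemma interval_integral_sum_real:
  fixes f :: "real \<Rightarrow> real"
  assumes "\<And>x y. interval_lebesgue_integrable lborel (ereal x) (ereal y) f"
  shows "(LBINT z=ereal a..ereal b. f z) + (LBINT z=ereal b..ereal c. f z) = (LBINT z=ereal a..ereal c. f z)"
  by (rule interval_integral_sum) (metis assms ereal_min ereal_max)

lemma interval_integral_shift_weight:
  fixes u :: "real \<Rightarrow> real"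
  assumes "interval_lebesgue_integrable lborel a b u"
    and "interval_lebesgue_integrable lborel a b (\<lambda>z. (z - p) * u z)"
  shows "(LBINT z=a..b. (z - p') * u z) = (LBINT z=a..b. (z - p) * u z) + (p - p') * (LBINT z=a..b. u z)"
proof -
  have "(LBINT z=a..b. (z - p') * u z) = (LBINT z=a..b. (z - p) * u z + (p - p') * u z)"
    by (simp add: algebra_simps)
  also have "\<dots> = (LBINT z=a..b. (z - p) * u z) + (p - p') * (LBINT z=a..b. u z)"
    using assms by simp
  finally show ?thesis .
qed

definition phi_condition :: "(real \<Rightarrow> real) \<Rightarrow> real \<Rightarrow> real \<Rightarrow> real \<Rightarrow> real \<Rightarrow> real" where
  "phi_condition w p q a b =
     (LBINT z=ereal a..ereal b. (z - p) * w z) + (q - p) * (LBINT z=ereal b..\<infinity>. w z)"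

definition psi_condition :: "(real \<Rightarrow> real) \<Rightarrow> real \<Rightarrow> real \<Rightarrow> real \<Rightarrow> real \<Rightarrow> real" where
  "psi_condition v p q a b =
     (LBINT z=ereal a..ereal b. (z - q) * v z) - (q - p) * (LBINT z=-\<infinity>..ereal a. v z)"

locale boundary_weights =
  fixes w v :: "real \<Rightarrow> real"
  assumes w_measurable[measurable]: "w \<in> borel_measurable borel"
    and v_measurable[measurable]: "v \<in> borel_measurable borel"
    and w_pos: "0 < w z" and v_pos: "0 < v z"
    and w_bounded: "bounded (w ` {x..y})" and v_bounded: "bounded (v ` {x..y})"
    and w_tail_integrable: "interval_lebesgue_integrable lborel (ereal x) \<infinity> w"
    and v_head_integrable: "interval_lebesgue_integrable lborel (-\<infinity>) (ereal x) v"
    and ratio_strict_mono: "strict_mono (\<lambda>z. v z / w z)"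
begin

lemma w_integrable: "interval_lebesgue_integrable lborel (ereal x) (ereal y) w"
  by (rule interval_integrable_locally_bounded[OF w_measurable w_bounded])

lemma v_integrable: "interval_lebesgue_integrable lborel (ereal x) (ereal y) v"
  by (rule interval_integrable_locally_bounded[OF v_measurable v_bounded])

lemma affine_w_integrable:
  "interval_lebesgue_integrable lborel (ereal x) (ereal y) (\<lambda>z. (z - c) * w z)"
  by (rule interval_integrable_locally_bounded) (auto intro: bounded_image_affine_mult w_bounded)

lemma affine_v_integrable:
  "interval_lebesgue_integrable lborel (ereal x) (ereal y) (\<lambda>z. (z - c) * v z)"
  by (rule interval_integrable_locally_bounded) (auto intro: bounded_image_affine_mult v_bounded)

lemma phi_condition_diff:
  "phi_condition w p q a' b' - phi_condition w p q a b =
     (LBINT z=ereal a'..ereal a. (z - p) * w z) + (LBINT z=ereal b..ereal b'. (z - q) * w z)"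
proof -
  have "(LBINT z=ereal a'..ereal a. (z - p) * w z) + (LBINT z=ereal a..ereal b. (z - p) * w z)
      = (LBINT z=ereal a'..ereal b. (z - p) * w z)"
    by (rule interval_integral_sum_real[OF affine_w_integrable])
  moreover have "(LBINT z=ereal a'..ereal b. (z - p) * w z) + (LBINT z=ereal b..ereal b'. (z - p) * w z)
      = (LBINT z=ereal a'..ereal b'. (z - p) * w z)"
    by (rule interval_integral_sum_real[OF affine_w_integrable])
  moreover have "(LBINT z=ereal b..ereal b'. w z) + (LBINT z=ereal b'..\<infinity>. w z) = (LBINT z=ereal b..\<infinity>. w z)"
    by (rule interval_integral_sum) (auto simp: min_def max_def intro: w_tail_integrable)
  then have "(q - p) * (LBINT z=ereal b..\<infinity>. w z)
      = (q - p) * (LBINT z=ereal b..ereal b'. w z) + (q - p) * (LBINT z=ereal b'..\<infinity>. w z)"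
    by (metis distrib_left)
  moreover have "(LBINT z=ereal b..ereal b'. (z - p) * w z)
      = (LBINT z=ereal b..ereal b'. (z - q) * w z) + (q - p) * (LBINT z=ereal b..ereal b'. w z)"
    by (rule interval_integral_shift_weight[OF w_integrable affine_w_integrable])
  ultimately show ?thesis
    unfolding phi_condition_def by linarith
qed

lemma psi_condition_diff:
  "psi_condition v p q a' b' - psi_condition v p q a b =
     (LBINT z=ereal a'..ereal a. (z - p) * v z) + (LBINT z=ereal b..ereal b'. (z - q) * v z)"
proof -
  have "(LBINT z=ereal a'..ereal a. (z - q) * v z) + (LBINT z=ereal a..ereal b. (z - q) * v z)
      = (LBINT z=ereal a'..ereal b. (z - q) * v z)"
    by (rule interval_integral_sum_real[OF affine_v_integrable])
  moreover have "(LBINT z=ereal a'..ereal b. (z - q) * v z) + (LBINT z=ereal b..ereal b'. (z - q) * v z)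
      = (LBINT z=ereal a'..ereal b'. (z - q) * v z)"
    by (rule interval_integral_sum_real[OF affine_v_integrable])
  moreover have "(LBINT z=-\<infinity>..ereal a. v z) + (LBINT z=ereal a..ereal a'. v z) = (LBINT z=-\<infinity>..ereal a'. v z)"
    by (rule interval_integral_sum) (auto simp: min_def max_def intro: v_head_integrable)
  then have "(q - p) * (LBINT z=-\<infinity>..ereal a'. v z)
      = (q - p) * (LBINT z=-\<infinity>..ereal a. v z) - (q - p) * (LBINT z=ereal a'..ereal a. v z)"
    by (metis interval_integral_endpoints_reverse diff_conv_add_uminus distrib_left mult_minus_right)
  moreover have "(LBINT z=ereal a'..ereal a. (z - p) * v z)
      = (LBINT z=ereal a'..ereal a. (z - q) * v z) + (q - p) * (LBINT z=ereal a'..ereal a. v z)"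
    by (rule interval_integral_shift_weight[OF v_integrable affine_v_integrable])
  ultimately show ?thesis
    unfolding psi_condition_def by linarith
qed

lemma phi_condition_mono:
  assumes "p' \<le> p" and "q \<le> q'" and "a \<le> b"
  shows "phi_condition w p q a b \<le> phi_condition w p' q' a b"
proof -
  have "0 \<le> (p - p') * (LBINT z=ereal a..ereal b. w z)"
    using assms by (intro mult_nonneg_nonneg interval_integral_nonneg) (auto intro: less_imp_le w_pos)
  moreover have "0 \<le> ((q' - p') - (q - p)) * (LBINT z=ereal b..\<infinity>. w z)"
    using assms by (intro mult_nonneg_nonneg interval_integral_nonneg) (auto intro: less_imp_le w_pos)
  ultimately show ?thesis
    unfolding phi_condition_def
      interval_integral_shift_weight[OF w_integrable affine_w_integrable, of a b p p']
    by (simp add: algebra_simps)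
qed

lemma psi_condition_mono:
  assumes "p' \<le> p" and "q \<le> q'" and "a \<le> b"
  shows "psi_condition v p' q' a b \<le> psi_condition v p q a b"
proof -
  have "0 \<le> (q' - q) * (LBINT z=ereal a..ereal b. v z)"
    using assms by (intro mult_nonneg_nonneg interval_integral_nonneg) (auto intro: less_imp_le v_pos)
  moreover have "0 \<le> ((q' - p') - (q - p)) * (LBINT z=-\<infinity>..ereal a. v z)"
    using assms by (intro mult_nonneg_nonneg interval_integral_nonneg) (auto intro: less_imp_le v_pos)
  ultimately show ?thesis
    unfolding psi_condition_def
      interval_integral_shift_weight[OF v_integrable affine_v_integrable, of a b q' q]
    by (simp add: algebra_simps)
qed

(* With R = v a' / w a': on (a, a') the factor z - p is negative and v < R w, on (b', b) the
   factor z - q is nonnegative and v > R w. *)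
lemma ratio_crossing:
  assumes "a < a'" and "a' \<le> p" and "q \<le> b'" and "a' \<le> b'" and "b' \<le> b"
  shows "(LBINT z=ereal a'..ereal a. (z - p) * v z) + (LBINT z=ereal b..ereal b'. (z - q) * v z)
    < v a' / w a' * ((LBINT z=ereal a'..ereal a. (z - p) * w z) + (LBINT z=ereal b..ereal b'. (z - q) * w z))"
proof -
  define R where "R = v a' / w a'"
  have below: "v z < R * w z" if "z < a'" for z
    using strict_monoD[OF ratio_strict_mono that] w_pos[of z] by (simp add: R_def pos_divide_less_eq)
  have above: "R * w z < v z" if "a' < z" for z
    using strict_monoD[OF ratio_strict_mono that] w_pos[of z] by (simp add: R_def pos_less_divide_eq)
  have "0 < (LBINT z=ereal a..ereal a'. (z - p) * v z - R * ((z - p) * w z))"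
  proof (rule interval_integral_pos)
    fix z assume "ereal a < ereal z" "ereal z < ereal a'"
    then have "z - p < 0" and "v z - R * w z < 0"
      using \<open>a' \<le> p\<close> below by auto
    then show "0 < (z - p) * v z - R * ((z - p) * w z)"
      by (metis mult_neg_neg right_diff_distrib mult.left_commute)
  qed (use \<open>a < a'\<close> affine_v_integrable affine_w_integrable in auto)
  moreover have "0 \<le> (LBINT z=ereal b'..ereal b. (z - q) * v z - R * ((z - q) * w z))"
  proof (rule interval_integral_nonneg)
    fix z assume "ereal b' < ereal z" "ereal z < ereal b"
    then have "0 \<le> z - q" and "0 < v z - R * w z"
      using \<open>q \<le> b'\<close> \<open>a' \<le> b'\<close> above by auto
    then show "0 \<le> (z - q) * v z - R * ((z - q) * w z)"
      by (metis mult_nonneg_nonneg less_imp_le right_diff_distrib mult.left_commute)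
  qed (use \<open>b' \<le> b\<close> in auto)
  moreover have split: "(LBINT z=ereal x..ereal y. (z - c) * v z - R * ((z - c) * w z))
      = (LBINT z=ereal x..ereal y. (z - c) * v z) - R * (LBINT z=ereal x..ereal y. (z - c) * w z)"
    for x y c
    by (subst interval_lebesgue_integral_diff(2)) (auto intro: affine_v_integrable affine_w_integrable)
  ultimately have "R * (LBINT z=ereal a..ereal a'. (z - p) * w z) < (LBINT z=ereal a..ereal a'. (z - p) * v z)"
    and "R * (LBINT z=ereal b'..ereal b. (z - q) * w z) \<le> (LBINT z=ereal b'..ereal b. (z - q) * v z)"
    by (simp_all only: split)
  then show ?thesis
    unfolding R_def[symmetric]
      interval_integral_endpoints_reverse[of "ereal a'" "ereal a"]
      interval_integral_endpoints_reverse[of "ereal b" "ereal b'"]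
    by (simp only: distrib_left mult_minus_right)
qed

lemma boundaries_compare:
  assumes "p < q" and "a < p" and "a' < p" and "q < b" and "q < b'"
    and "phi_condition w p q a b = 0" and "psi_condition v p q a b = 0"
    and "phi_condition w p q a' b' \<le> 0" and "0 \<le> psi_condition v p q a' b'"
  shows "a' \<le> a \<and> b \<le> b'"
proof (rule ccontr)
  let ?Lw = "LBINT z=ereal a'..ereal a. (z - p) * w z"
  let ?Rw = "LBINT z=ereal b..ereal b'. (z - q) * w z"
  let ?Lv = "LBINT z=ereal a'..ereal a. (z - p) * v z"
  let ?Rv = "LBINT z=ereal b..ereal b'. (z - q) * v z"
  have phi: "?Lw + ?Rw \<le> 0"
    using phi_condition_diff[of p q a' b' a b] assms(6,8) by linarith
  have psi: "0 \<le> ?Lv + ?Rv"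
    using psi_condition_diff[of p q a' b' a b] assms(7,9) by linarith
  assume "\<not> (a' \<le> a \<and> b \<le> b')"
  then consider "a < a'" "b \<le> b'" | "a' \<le> a" "b' < b" | "a < a'" "b' < b"
    by linarith
  then show False
  proof cases
    case 1
    have "(LBINT z=ereal a..ereal a'. (z - p) * w z) < 0"
      using 1 \<open>a' < p\<close> w_pos by (intro interval_integral_neg affine_w_integrable)
        (auto intro: mult_neg_pos)
    moreover have "0 \<le> ?Rw"
      using 1 \<open>q < b\<close> w_pos by (intro interval_integral_nonneg) (auto intro: less_imp_le)
    ultimately show False
      using phi by (simp add: interval_integral_endpoints_reverse[of _ "ereal a"])
  next
    case 2
    have "?Lv \<le> 0"
      using 2 \<open>a < p\<close> v_pos by (intro interval_integral_nonpos)
        (auto intro!: mult_nonpos_nonneg intro: less_imp_le)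
    moreover have "0 < (LBINT z=ereal b'..ereal b. (z - q) * v z)"
      using 2 \<open>q < b'\<close> v_pos by (intro interval_integral_pos affine_v_integrable) auto
    ultimately show False
      using psi by (simp add: interval_integral_endpoints_reverse[of _ "ereal b"])
  next
    case 3
    have "?Lv + ?Rv < v a' / w a' * (?Lw + ?Rw)"
      using 3 assms(1,3,5) by (intro ratio_crossing) auto
    moreover have "v a' / w a' * (?Lw + ?Rw) \<le> 0"
      using phi v_pos[of a'] w_pos[of a'] by (intro mult_nonneg_nonpos) simp_all
    ultimately show False
      using psi by linarith
  qed
qed

end

definition parab_cyl_integral :: "real \<Rightarrow> real \<Rightarrow> real" where
  "parab_cyl_integral e y = (LBINT t=0..\<infinity>. t powr e * exp (- (t^2) / 2 - y * t))"

lemma parab_cyl_integrand_integrable: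
  assumes "-1 < e"
  shows "interval_lebesgue_integrable lborel 0 \<infinity> (\<lambda>t. t powr e * exp (- (t^2) / 2 - y * t))"
proof -
  define C where "C = exp ((1 - y)^2 / 2)"
  have "integrable lborel (\<lambda>t. indicator {0..} t * t powr (e + 1 - 1) / exp t)"
  proof (rule integrableI_nonneg)
    show "(\<lambda>t. indicator {0..} t * t powr (e + 1 - 1) / exp t) \<in> borel_measurable lborel"
      by measurable
    show "AE t in lborel. 0 \<le> indicator {0..} t * t powr (e + 1 - 1) / exp t"
      by (intro AE_I2) (simp add: indicator_def)
    have "(\<integral>\<^sup>+ t. ennreal (indicator {0..} t * t powr (e + 1 - 1) / exp t) \<partial>lborel) = ennreal (Gamma (e + 1))"
      using Gamma_conv_nn_integral_real[of "e + 1"] assms by simp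
    then show "(\<integral>\<^sup>+ t. ennreal (indicator {0..} t * t powr (e + 1 - 1) / exp t) \<partial>lborel) < \<infinity>"
      by simp
  qed
  then have "set_integrable lborel {0..} (\<lambda>t. t powr e / exp t)"
    unfolding set_integrable_def by simp
  then have dominant: "set_integrable lborel {0<..} (\<lambda>t. C * (t powr e / exp t))"
    by (intro set_integrable_mult_right) (rule set_integrable_subset, auto)
  have exp_bound: "exp (- (t^2) / 2 - y * t) \<le> C / exp t" for t
  proof -
    have "- (t^2) / 2 - y * t + t \<le> (1 - y)^2 / 2"
      using zero_le_power2[of "1 - y - t"] by (simp add: power2_eq_square algebra_simps)
    then show ?thesis
      by (simp add: C_def pos_le_divide_eq flip: exp_add)
  qed
  have dominated: "\<bar>t powr e * exp (- (t^2) / 2 - y * t)\<bar> \<le> \<bar>C * (t powr e / exp t)\<bar>" for t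
  proof -
    have "\<bar>t powr e * exp (- (t^2) / 2 - y * t)\<bar> = t powr e * exp (- (t^2) / 2 - y * t)"
      by simp
    also have "\<dots> \<le> t powr e * (C / exp t)"
      by (rule mult_left_mono[OF exp_bound]) simp
    also have "\<dots> = \<bar>C * (t powr e / exp t)\<bar>"
      by (simp add: C_def)
    finally show ?thesis .
  qed
  show ?thesis
    unfolding interval_lebesgue_integral_0_infty
    by (rule set_integrable_bound[OF dominant])
      (simp add: set_borel_measurable_def, intro AE_I2 impI, simp only: real_norm_def dominated)
qed

lemma parab_cyl_integral_pos:
  assumes "-1 < e"
  shows "0 < parab_cyl_integral e y"
  unfolding parab_cyl_integral_def
  by (rule interval_integral_pos[OF _ parab_cyl_integrand_integrable[OF assms]])
    (auto simp: zero_ereal_def)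

lemma parab_cyl_integral_strict_antimono:
  assumes "-1 < e" and "y1 < y2"
  shows "parab_cyl_integral e y2 < parab_cyl_integral e y1"
proof -
  have "0 < (LBINT t=0..\<infinity>. t powr e * exp (- (t^2) / 2 - y1 * t) - t powr e * exp (- (t^2) / 2 - y2 * t))"
  proof (rule interval_integral_pos)
    fix t assume "0 < ereal t"
    then have "y1 * t < y2 * t" and "0 < t"
      using \<open>y1 < y2\<close> by (auto simp: zero_ereal_def)
    then show "0 < t powr e * exp (- (t^2) / 2 - y1 * t) - t powr e * exp (- (t^2) / 2 - y2 * t)"
      by (simp add: right_diff_distrib[symmetric])
  qed (use parab_cyl_integrand_integrable[OF assms(1)] in auto)
  then show ?thesis
    unfolding parab_cyl_integral_def
    using parab_cyl_integrand_integrable[OF assms(1)] by simp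
qed

(* The Gaussian prefactor in phi_hat and psi_hat cancels the exp (- y^2 / 4) in parab_cyl. *)
lemma phi_psi_hat_eq:
  assumes "0 < \<rho>"
  shows "phi_hat r \<rho> m \<sigma> x = parab_cyl_integral (r / \<rho>) ((x - m) * sqrt (2 * \<rho>) / \<sigma>) / Gamma ((r + \<rho>) / \<rho>)"
    and "psi_hat r \<rho> m \<sigma> x = parab_cyl_integral (r / \<rho>) (- ((x - m) * sqrt (2 * \<rho>) / \<sigma>)) / Gamma ((r + \<rho>) / \<rho>)"
proof -
  have "\<rho> * (x - m)^2 / (2 * \<sigma>^2) = ((x - m) * sqrt (2 * \<rho>) / \<sigma>)^2 / 4"
    using assms by (simp add: power_mult_distrib power_divide)
  then have cancel: "exp (\<rho> * (x - m)^2 / (2 * \<sigma>^2)) * exp (- (((x - m) * sqrt (2 * \<rho>) / \<sigma>)^2) / 4) = 1"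
    by (simp flip: exp_add)
  have exponent: "(r + \<rho>) / \<rho> - 1 = r / \<rho>" and gamma_arg: "- (- (r + \<rho>) / \<rho>) = (r + \<rho>) / \<rho>"
    using assms by (simp_all add: field_simps)
  have scale: "ea * (eb / G * I) = I / G" if "ea * eb = 1" for ea eb G I :: real
    using that by (metis mult.assoc mult.left_commute mult_1 times_divide_eq_left times_divide_eq_right)
  show "phi_hat r \<rho> m \<sigma> x = parab_cyl_integral (r / \<rho>) ((x - m) * sqrt (2 * \<rho>) / \<sigma>) / Gamma ((r + \<rho>) / \<rho>)"
    unfolding phi_hat_def parab_cyl_def parab_cyl_integral_def gamma_arg exponent
    by (rule scale[OF cancel])
  show "psi_hat r \<rho> m \<sigma> x = parab_cyl_integral (r / \<rho>) (- ((x - m) * sqrt (2 * \<rho>) / \<sigma>)) / Gamma ((r + \<rho>) / \<rho>)"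
    unfolding psi_hat_def parab_cyl_def parab_cyl_integral_def gamma_arg exponent
    by (rule scale) (use cancel in simp)
qed

context
  fixes r \<rho> m \<sigma> :: real
begin

abbreviation phi_weight :: "real \<Rightarrow> real" where
  "phi_weight z \<equiv> speed_dens \<rho> m \<sigma> z * phi_hat r \<rho> m \<sigma> z"

abbreviation psi_weight :: "real \<Rightarrow> real" where
  "psi_weight z \<equiv> speed_dens \<rho> m \<sigma> z * psi_hat r \<rho> m \<sigma> z"

lemma opt_boundaries_iff_conditions:
  "opt_boundaries r \<rho> m \<sigma> \<theta> c1 c2 a b \<longleftrightarrow>
     a < b \<and> a < \<theta> - (r + \<rho>) * c1 \<and> \<theta> + (r + \<rho>) * c2 < b \<and>
     phi_condition phi_weight (\<theta> - (r + \<rho>) * c1) (\<theta> + (r + \<rho>) * c2) a b = 0 \<and>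
     psi_condition psi_weight (\<theta> - (r + \<rho>) * c1) (\<theta> + (r + \<rho>) * c2) a b = 0"
proof -
  have "(\<lambda>z. (z - \<theta> + (r + \<rho>) * c1) * speed_dens \<rho> m \<sigma> z * phi_hat r \<rho> m \<sigma> z)
      = (\<lambda>z. (z - (\<theta> - (r + \<rho>) * c1)) * phi_weight z)"
    and "(\<lambda>z. (z - \<theta> - (r + \<rho>) * c2) * speed_dens \<rho> m \<sigma> z * psi_hat r \<rho> m \<sigma> z)
      = (\<lambda>z. (z - (\<theta> + (r + \<rho>) * c2)) * psi_weight z)"
    and "\<theta> + (r + \<rho>) * c2 - (\<theta> - (r + \<rho>) * c1) = (r + \<rho>) * (c1 + c2)"
    by (auto simp: algebra_simps)
  then show ?thesis
    unfolding opt_boundaries_def phi_condition_def psi_condition_def by (auto simp: algebra_simps)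
qed

context
  assumes r_pos: "0 < r" and rho_pos: "0 < \<rho>" and sigma_pos: "0 < \<sigma>"
begin

lemma r_div_rho_gt_minus_one: "-1 < r / \<rho>"
  using divide_pos_pos[OF r_pos rho_pos] by linarith

lemma Gamma_shifted_exponent_pos: "0 < Gamma ((r + \<rho>) / \<rho>)"
  using r_pos rho_pos by (intro Gamma_real_pos divide_pos_pos) auto

lemma phi_hat_pos: "0 < phi_hat r \<rho> m \<sigma> x"
  unfolding phi_psi_hat_eq(1)[OF rho_pos]
  by (intro divide_pos_pos parab_cyl_integral_pos r_div_rho_gt_minus_one Gamma_shifted_exponent_pos)

lemma psi_hat_pos: "0 < psi_hat r \<rho> m \<sigma> x"
  unfolding phi_psi_hat_eq(2)[OF rho_pos]
  by (intro divide_pos_pos parab_cyl_integral_pos r_div_rho_gt_minus_one Gamma_shifted_exponent_pos)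

lemma scaled_argument_strict_mono: "x1 < x2 \<Longrightarrow> (x1 - m) * sqrt (2 * \<rho>) / \<sigma> < (x2 - m) * sqrt (2 * \<rho>) / \<sigma>"
  using rho_pos sigma_pos by (intro divide_strict_right_mono mult_strict_right_mono) auto

lemma phi_hat_strict_antimono: "x1 < x2 \<Longrightarrow> phi_hat r \<rho> m \<sigma> x2 < phi_hat r \<rho> m \<sigma> x1"
  unfolding phi_psi_hat_eq(1)[OF rho_pos]
  by (intro divide_strict_right_mono parab_cyl_integral_strict_antimono scaled_argument_strict_mono
      r_div_rho_gt_minus_one Gamma_shifted_exponent_pos)

lemma psi_hat_strict_mono: "strict_mono (psi_hat r \<rho> m \<sigma>)"
  unfolding strict_mono_def phi_psi_hat_eq(2)[OF rho_pos]
  by (intro allI impI divide_strict_right_mono parab_cyl_integral_strict_antimono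
      r_div_rho_gt_minus_one Gamma_shifted_exponent_pos)
    (simp add: scaled_argument_strict_mono)

lemma phi_hat_antimono: "x1 \<le> x2 \<Longrightarrow> phi_hat r \<rho> m \<sigma> x2 \<le> phi_hat r \<rho> m \<sigma> x1"
  by (auto simp: le_less dest: phi_hat_strict_antimono)

lemma psi_hat_mono: "x1 \<le> x2 \<Longrightarrow> psi_hat r \<rho> m \<sigma> x1 \<le> psi_hat r \<rho> m \<sigma> x2"
  using strict_mono_mono[OF psi_hat_strict_mono] by (simp add: monoD)

lemma phi_hat_measurable[measurable]: "phi_hat r \<rho> m \<sigma> \<in> borel_measurable borel"
proof -
  have "mono (\<lambda>x. - phi_hat r \<rho> m \<sigma> x)"
    by (auto simp: mono_def phi_hat_antimono)
  then have "(\<lambda>x. - (- phi_hat r \<rho> m \<sigma> x)) \<in> borel_measurable borel"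
    by (intro borel_measurable_uminus borel_measurable_mono)
  then show ?thesis by simp
qed

lemma psi_hat_measurable[measurable]: "psi_hat r \<rho> m \<sigma> \<in> borel_measurable borel"
  by (rule borel_measurable_mono) (simp add: mono_def psi_hat_mono)

lemma speed_dens_pos: "0 < speed_dens \<rho> m \<sigma> z"
  unfolding speed_dens_def using sigma_pos by simp

lemma speed_dens_le: "speed_dens \<rho> m \<sigma> z \<le> 2 / \<sigma>^2"
proof -
  have "exp (- \<rho> * (z - m)^2 / \<sigma>^2) \<le> 1"
    using rho_pos by (simp add: divide_nonpos_pos mult_nonpos_nonneg)
  then have "2 / \<sigma>^2 * exp (- \<rho> * (z - m)^2 / \<sigma>^2) \<le> 2 / \<sigma>^2 * 1"
    by (intro mult_left_mono) auto
  then show ?thesis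
    unfolding speed_dens_def by simp
qed

lemma speed_dens_measurable[measurable]: "speed_dens \<rho> m \<sigma> \<in> borel_measurable borel"
  unfolding speed_dens_def by measurable

lemma speed_dens_integrable: "integrable lborel (speed_dens \<rho> m \<sigma>)"
proof -
  define s where "s = \<sigma> / sqrt (2 * \<rho>)"
  have "0 < s" and s2: "s^2 = \<sigma>^2 / (2 * \<rho>)"
    unfolding s_def using rho_pos sigma_pos by (simp_all add: power_divide)
  have "speed_dens \<rho> m \<sigma> z = 2 / \<sigma>^2 * sqrt (2 * pi * s^2) * normal_density m s z" for z
  proof -
    have "- ((z - m)^2) / (2 * s^2) = - \<rho> * (z - m)^2 / \<sigma>^2"
      using s2 \<open>0 < s\<close> rho_pos sigma_pos by (simp add: field_simps)
    then show ?thesis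
      unfolding speed_dens_def normal_density_def using \<open>0 < s\<close> by simp
  qed
  then have "speed_dens \<rho> m \<sigma> = (\<lambda>z. 2 / \<sigma>^2 * sqrt (2 * pi * s^2) * normal_density m s z)"
    by (rule ext)
  then show ?thesis
    using \<open>0 < s\<close> by (simp only:) (rule integrable_mult_right[OF integrable_normal_density])
qed

lemma phi_weight_tail_integrable:
  "interval_lebesgue_integrable lborel (ereal x) \<infinity> phi_weight"
  unfolding interval_integrable_to_infinity_eq
proof (rule set_integrable_bound)
  show "set_integrable lborel {x<..} (\<lambda>z. speed_dens \<rho> m \<sigma> z * phi_hat r \<rho> m \<sigma> x)"
    unfolding set_integrable_def using speed_dens_integrable
    by (intro integrable_mult_indicator integrable_mult_left) auto
  show "AE z in lborel. z \<in> {x<..} \<longrightarrow>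
      norm (phi_weight z) \<le> norm (speed_dens \<rho> m \<sigma> z * phi_hat r \<rho> m \<sigma> x)"
    by (intro AE_I2 impI)
      (simp add: abs_mult abs_of_pos speed_dens_pos phi_hat_pos phi_hat_antimono)
qed (unfold set_borel_measurable_def, measurable)

lemma psi_weight_head_integrable:
  "interval_lebesgue_integrable lborel (-\<infinity>) (ereal x) psi_weight"
proof -
  have "set_integrable lborel {..<x} psi_weight"
  proof (rule set_integrable_bound)
    show "set_integrable lborel {..<x} (\<lambda>z. speed_dens \<rho> m \<sigma> z * psi_hat r \<rho> m \<sigma> x)"
      unfolding set_integrable_def using speed_dens_integrable
      by (intro integrable_mult_indicator integrable_mult_left) auto
    show "AE z in lborel. z \<in> {..<x} \<longrightarrow>
        norm (psi_weight z) \<le> norm (speed_dens \<rho> m \<sigma> z * psi_hat r \<rho> m \<sigma> x)"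
      by (intro AE_I2 impI)
        (simp add: abs_mult abs_of_pos speed_dens_pos psi_hat_pos psi_hat_mono)
  qed (unfold set_borel_measurable_def, measurable)
  moreover have "einterval (-\<infinity>) (ereal x) = {..<x}"
    by (auto simp: einterval_def)
  ultimately show ?thesis
    by (simp add: interval_lebesgue_integrable_def)
qed

lemma boundary_weights_ou: "boundary_weights phi_weight psi_weight"
proof
  fix x y z :: real
  show "0 < phi_weight z" and "0 < psi_weight z"
    by (simp_all add: speed_dens_pos phi_hat_pos psi_hat_pos)
  have "\<bar>phi_weight z\<bar> \<le> 2 / \<sigma>^2 * phi_hat r \<rho> m \<sigma> x" if "z \<in> {x..y}" for z
  proof -
    have "phi_weight z \<le> 2 / \<sigma>^2 * phi_hat r \<rho> m \<sigma> x"
      using that by (intro mult_mono speed_dens_le phi_hat_antimono) (auto intro: less_imp_le phi_hat_pos)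
    then show ?thesis
      using speed_dens_pos[of z] phi_hat_pos[of z] by simp
  qed
  then show "bounded (phi_weight ` {x..y})"
    unfolding bounded_real by blast
  have "\<bar>psi_weight z\<bar> \<le> 2 / \<sigma>^2 * psi_hat r \<rho> m \<sigma> y" if "z \<in> {x..y}" for z
  proof -
    have "psi_weight z \<le> 2 / \<sigma>^2 * psi_hat r \<rho> m \<sigma> y"
      using that by (intro mult_mono speed_dens_le psi_hat_mono) (auto intro: less_imp_le psi_hat_pos)
    then show ?thesis
      using speed_dens_pos[of z] psi_hat_pos[of z] by simp
  qed
  then show "bounded (psi_weight ` {x..y})"
    unfolding bounded_real by blast
  have "psi_weight z / phi_weight z = psi_hat r \<rho> m \<sigma> z / phi_hat r \<rho> m \<sigma> z" for z
    using speed_dens_pos[of z] by simp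
  then show "strict_mono (\<lambda>z. psi_weight z / phi_weight z)"
    using strict_monoD[OF psi_hat_strict_mono] phi_hat_strict_antimono psi_hat_pos phi_hat_pos
    by (auto simp: strict_mono_def intro!: frac_less less_imp_le)
qed (auto intro: phi_weight_tail_integrable psi_weight_head_integrable)

lemma opt_boundaries_antimono:
  assumes "c1 \<le> c1'" and "c2 \<le> c2'" and "0 < c1 + c2"
    and "opt_boundaries r \<rho> m \<sigma> \<theta> c1 c2 a b"
    and "opt_boundaries r \<rho> m \<sigma> \<theta> c1' c2' a' b'"
  shows "a' \<le> a \<and> b \<le> b'"
proof -
  interpret boundary_weights phi_weight psi_weight
    by (rule boundary_weights_ou)
  define p q p' q' where "p = \<theta> - (r + \<rho>) * c1" and "q = \<theta> + (r + \<rho>) * c2"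
    and "p' = \<theta> - (r + \<rho>) * c1'" and "q' = \<theta> + (r + \<rho>) * c2'"
  have "0 < r + \<rho>"
    using r_pos rho_pos by simp
  then have "(r + \<rho>) * c1 \<le> (r + \<rho>) * c1'" and "(r + \<rho>) * c2 \<le> (r + \<rho>) * c2'"
    and "0 < (r + \<rho>) * c1 + (r + \<rho>) * c2"
    using assms(1-3) by (simp_all add: mult_left_mono flip: distrib_left)
  then have "p' \<le> p" and "q \<le> q'" and "p < q"
    unfolding p_def q_def p'_def q'_def by linarith+
  from assms(4) have old: "a < p" "q < b" "phi_condition phi_weight p q a b = 0" "psi_condition psi_weight p q a b = 0"
    unfolding opt_boundaries_iff_conditions p_def q_def by auto
  from assms(5) have new: "a' < b'" "a' < p'" "q' < b'"
    "phi_condition phi_weight p' q' a' b' = 0" "psi_condition psi_weight p' q' a' b' = 0"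
    unfolding opt_boundaries_iff_conditions p'_def q'_def by auto
  show ?thesis
  proof (rule boundaries_compare)
    show "phi_condition phi_weight p q a' b' \<le> 0"
      using phi_condition_mono[of p' p q q' a' b'] \<open>p' \<le> p\<close> \<open>q \<le> q'\<close> new by simp
    show "0 \<le> psi_condition psi_weight p q a' b'"
      using psi_condition_mono[of p' p q q' a' b'] \<open>p' \<le> p\<close> \<open>q \<le> q'\<close> new by simp
  qed (use old new \<open>p < q\<close> \<open>p' \<le> p\<close> \<open>q \<le> q'\<close> in auto)
qed

end

end

theorem proposition4p3:
  fixes r \<rho> m \<sigma> \<theta> :: real
  assumes "r > 0" and "\<rho> > 0" and "\<sigma> > 0"
  shows "(\<forall>c1 c1' c2 a b a' b'.
            c1 < c1' \<and> c1 + c2 > 0 \<and>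
            opt_boundaries r \<rho> m \<sigma> \<theta> c1 c2 a b \<and>
            opt_boundaries r \<rho> m \<sigma> \<theta> c1' c2 a' b'
            \<longrightarrow> a' \<le> a \<and> b \<le> b') \<and>
         (\<forall>c1 c2 c2' a b a' b'.
            c2 < c2' \<and> c1 + c2 > 0 \<and>
            opt_boundaries r \<rho> m \<sigma> \<theta> c1 c2 a b \<and>
            opt_boundaries r \<rho> m \<sigma> \<theta> c1 c2' a' b'
            \<longrightarrow> a' \<le> a \<and> b \<le> b')"
  using opt_boundaries_antimono[OF assms] by (meson less_imp_le order_refl)

end
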